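(* Let $k\geq 4$. For every $0\leq \gamma< 1/2$, every $n$-node graph with maximum degree at most $\sqrt{n}$ that has at least $n^{k/2+\gamma}$ $k$-cycles must contain at least $\frac{1}{2}n^{k/2-1+\gamma}$ simple $\gamma$-dense $(k-2)$-paths.
   Context: In an $n$-node graph, a $(k-2)$-path is a path $u,u_1,\ldots,u_{k-4},w$ on $k-2$ nodes (counting both endpoints); it is simple if its nodes are distinct. A simple $(k-2)$-path is $\gamma$-dense if the number of $k$-cycles (simple cycles on $k$ vertices) that contain it as a subpath is at least $n^{1/2+\gamma}/2$. *)

theory Defs
  imports Complex_Main
begin

definition simple_graph :: "'a set \<Rightarrow> ('a \<Rightarrow> 'a \<Rightarrow> bool) \<Rightarrow> bool" where
  "simple_graph V E \<longleftrightarrow> finite V \<and> (\<forall>u v. E u v \<longrightarrow> u \<in> V \<and> v \<in> V)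
     \<and> (\<forall>u v. E u v \<longrightarrow> E v u) \<and> (\<forall>u. \<not> E u u)"

definition degree :: "'a set \<Rightarrow> ('a \<Rightarrow> 'a \<Rightarrow> bool) \<Rightarrow> 'a \<Rightarrow> nat" where
  "degree V E u = card {v \<in> V. E u v}"

text \<open>The k-cycles of the graph, each represented as a subgraph, i.e. by its set of edges
  (an edge being a 2-element set of vertices).\<close>
definition k_cycles :: "'a set \<Rightarrow> ('a \<Rightarrow> 'a \<Rightarrow> bool) \<Rightarrow> nat \<Rightarrow> 'a set set set" where
  "k_cycles V E k = {C. \<exists>xs. length xs = k \<and> distinct xs \<and> set xs \<subseteq> V
      \<and> (\<forall>i<k. E (xs ! i) (xs ! ((i + 1) mod k)))
      \<and> C = {{xs ! i, xs ! ((i + 1) mod k)} | i. i < k}}"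

definition simple_paths :: "'a set \<Rightarrow> ('a \<Rightarrow> 'a \<Rightarrow> bool) \<Rightarrow> nat \<Rightarrow> 'a list set" where
  "simple_paths V E m = {p. length p = m \<and> distinct p \<and> set p \<subseteq> V
      \<and> (\<forall>i. i + 1 < m \<longrightarrow> E (p ! i) (p ! (i + 1)))}"

definition path_edges :: "'a list \<Rightarrow> 'a set set" where
  "path_edges p = {{p ! i, p ! (i + 1)} | i. i + 1 < length p}"

definition cycles_through :: "'a set \<Rightarrow> ('a \<Rightarrow> 'a \<Rightarrow> bool) \<Rightarrow> nat \<Rightarrow> 'a list \<Rightarrow> nat" where
  "cycles_through V E k p = card {C \<in> k_cycles V E k. path_edges p \<subseteq> C}"

definition dense_path :: "'a set \<Rightarrow> ('a \<Rightarrow> 'a \<Rightarrow> bool) \<Rightarrow> nat \<Rightarrow> real \<Rightarrow> 'a list \<Rightarrow> bool" where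
  "dense_path V E k \<gamma> p \<longleftrightarrow> p \<in> simple_paths V E (k - 2)
      \<and> real (cycles_through V E k p) \<ge> real (card V) powr (1/2 + \<gamma>) / 2"

end

theory Submission
  imports Defs
begin

text \<open>Any k - 2 consecutive vertices of a k-cycle form a simple (k-2)-path, so the number of
  k-cycles is at most the sum, over all simple (k-2)-paths p, of the number of k-cycles through p.
  A k-cycle through p is determined by its two remaining vertices, a neighbour of each endpoint
  of p, so with maximum degree at most sqrt n every path lies on at most n cycles. Extending
  paths vertex by vertex, there are at most n * sqrt n ^ (k - 3) = n powr ((k - 1) / 2) simple
  (k-2)-paths, so the paths that are not \<gamma>-dense account for less than half of the at least
  n powr (k / 2 + \<gamma>) cycles; the dense paths, with at most n cycles each, account for the rest.\<close>

lemma card_ge_threshold_lower_bound: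
  fixes f :: "'a \<Rightarrow> real" and M S t :: real
  assumes "finite A" and le_M: "\<And>x. x \<in> A \<Longrightarrow> f x \<le> M" and "0 < M" and "0 \<le> t"
    and "S \<le> sum f A" and "card A * t \<le> S / 2"
  shows "S / (2 * M) \<le> card {x \<in> A. t \<le> f x}"
proof -
  let ?L = "{x \<in> A. t \<le> f x}"
  have "sum f A = sum f (A - ?L) + sum f ?L"
    using \<open>finite A\<close> by (intro sum.subset_diff) auto
  also have "sum f (A - ?L) \<le> card (A - ?L) * t"
    using sum_bounded_above[of "A - ?L" f t] by (simp add: not_le less_imp_le)
  also have "\<dots> \<le> card A * t"
    using \<open>finite A\<close> \<open>0 \<le> t\<close> by (intro mult_right_mono) (auto intro: card_mono)
  also have "sum f ?L \<le> card ?L * M"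
    using sum_bounded_above[of ?L f M] le_M by simp
  finally have "S / 2 \<le> card ?L * M" using assms(5,6) by linarith
  then show ?thesis using \<open>0 < M\<close> by (simp add: field_simps)
qed

definition cycle_edges :: "nat \<Rightarrow> 'a list \<Rightarrow> 'a set set" where
  "cycle_edges k xs = {{xs ! i, xs ! ((i + 1) mod k)} | i. i < k}"

lemma cycle_edgesI: "i < k \<Longrightarrow> {xs ! i, xs ! ((i + 1) mod k)} \<in> cycle_edges k xs"
  unfolding cycle_edges_def by auto

lemma mem_k_cycles_iff:
  "C \<in> k_cycles V E k \<longleftrightarrow> (\<exists>xs. length xs = k \<and> distinct xs \<and> set xs \<subseteq> V
      \<and> (\<forall>i<k. E (xs ! i) (xs ! ((i + 1) mod k))) \<and> C = cycle_edges k xs)"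
  unfolding k_cycles_def cycle_edges_def by simp

lemma cycle_edges_rotate:
  assumes "length xs = k" shows "cycle_edges k (rotate r xs) = cycle_edges k xs"
proof -
  have rotate_sub: "cycle_edges k (rotate s ys) \<subseteq> cycle_edges k ys"
    if "length ys = k" for s and ys :: "'a list"
  proof
    fix e assume "e \<in> cycle_edges k (rotate s ys)"
    then obtain i where i: "i < k" "e = {rotate s ys ! i, rotate s ys ! ((i + 1) mod k)}"
      unfolding cycle_edges_def by auto
    then have "e = {ys ! ((s + i) mod k), ys ! (((s + i) mod k + 1) mod k)}"
      using that by (simp add: nth_rotate mod_add_right_eq add.assoc mod_Suc_eq)
    then show "e \<in> cycle_edges k ys" using i(1) cycle_edgesI[of "(s + i) mod k" k ys] by simp
  qed
  have "rotate (k - r mod k) (rotate r xs) = xs"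
  proof (cases "k = 0")
    case False
    then have "(k - r mod k + r) mod k = 0"
      by (metis mod_add_right_eq mod_less_divisor le_add_diff_inverse2 less_imp_le
          mod_self neq0_conv)
    then show ?thesis using assms by (simp add: rotate_rotate)
  qed (use assms in simp)
  then show ?thesis
    using rotate_sub[OF assms, of r] rotate_sub[of "rotate r xs" "k - r mod k"] assms by simp
qed

lemma cycle_edges_rev:
  assumes "length xs = k" shows "cycle_edges k (rev xs) = cycle_edges k xs"
proof -
  have rev_sub: "cycle_edges k (rev ys) \<subseteq> cycle_edges k ys"
    if "length ys = k" for ys :: "'a list"
  proof
    fix e assume "e \<in> cycle_edges k (rev ys)"
    then obtain i where i: "i < k" "e = {rev ys ! i, rev ys ! ((i + 1) mod k)}"
      unfolding cycle_edges_def by auto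
    show "e \<in> cycle_edges k ys"
    proof (cases "i + 1 < k")
      case True
      then have "e = {ys ! (k - 2 - i), ys ! ((k - 2 - i + 1) mod k)}"
        using i that by (auto simp: rev_nth Suc_diff_Suc numeral_2_eq_2)
      then show ?thesis using True cycle_edgesI[of "k - 2 - i" k ys] by auto
    next
      case False
      then have "i = k - 1" using i(1) by simp
      then have "e = {ys ! (k - 1), ys ! ((k - 1 + 1) mod k)}"
        using i that by (auto simp: rev_nth)
      then show ?thesis using i(1) cycle_edgesI[of "k - 1" k ys] by auto
    qed
  qed
  show ?thesis using rev_sub[OF assms] rev_sub[of "rev xs"] assms by auto
qed

lemma cycle_edge_neighbour:
  assumes "distinct xs" "length xs = k" "j < k" "{xs ! j, y} \<in> cycle_edges k xs"
  shows "y = xs ! ((j + 1) mod k) \<or> y = xs ! ((j + k - 1) mod k)"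
proof -
  obtain l where l: "l < k" "{xs ! j, y} = {xs ! l, xs ! ((l + 1) mod k)}"
    using assms(4) unfolding cycle_edges_def by auto
  have inj: "xs ! a = xs ! b \<longleftrightarrow> a = b" if "a < k" "b < k" for a b
    using assms(1,2) that by (simp add: nth_eq_iff_index_eq)
  consider "xs ! j = xs ! l" "y = xs ! ((l + 1) mod k)" | "xs ! j = xs ! ((l + 1) mod k)" "y = xs ! l"
    using l(2) by (metis doubleton_eq_iff)
  then show ?thesis
  proof cases
    case 1
    then show ?thesis using inj[of j l] assms(3) l(1) by simp
  next
    case 2
    then have "j = (l + 1) mod k" using inj[of j "(l + 1) mod k"] assms(3) l(1) by simp
    then have "l = (j + k - 1) mod k"
    proof (cases "l + 1 < k")
      case False
      then have "l + 1 = k" using l(1) by simp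
      then have "l = k - 1" "j = 0" using \<open>j = (l + 1) mod k\<close> by auto
      then show ?thesis using l(1) by simp
    qed simp
    then show ?thesis using 2 by simp
  qed
qed

lemma cycle_edges_adjacent:
  assumes "\<forall>i<k. E (xs ! i) (xs ! ((i + 1) mod k))" "\<forall>u v. E u v \<longrightarrow> E v u"
    and "{a, b} \<in> cycle_edges k xs"
  shows "E a b"
proof -
  obtain l where "l < k" "{a, b} = {xs ! l, xs ! ((l + 1) mod k)}"
    using assms(3) unfolding cycle_edges_def by blast
  then show ?thesis using assms(1,2) unfolding doubleton_eq_iff by blast
qed

lemma cycle_prefix_eq_path:
  assumes xs: "distinct xs" "length xs = k" and p: "distinct p" "length p \<le> k"
    and sub: "path_edges p \<subseteq> cycle_edges k xs"
    and start: "p ! 0 = xs ! 0" "p ! 1 = xs ! 1"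
  shows "take (length p) xs = p"
proof -
  have "p ! i = xs ! i" if "i < length p" for i
    using that
  proof (induction i rule: less_induct)
    case (less i)
    show ?case
    proof (cases "i < 2")
      case True
      then show ?thesis using start by (cases i) auto
    next
      case False
      have prev: "p ! (i - 1) = xs ! (i - 1)" and prev2: "p ! (i - 2) = xs ! (i - 2)"
        using less False by auto
      have "{p ! (i - 1), p ! (i - 1 + 1)} \<in> path_edges p"
        using less.prems False unfolding path_edges_def by force
      then have "{xs ! (i - 1), p ! i} \<in> cycle_edges k xs"
        using sub prev False by auto
      then have "p ! i = xs ! ((i - 1 + 1) mod k) \<or> p ! i = xs ! ((i - 1 + k - 1) mod k)"
        using cycle_edge_neighbour[OF xs, of "i - 1"] less.prems p(2) by simp
      moreover have "(i - 1 + 1) mod k = i" "(i - 1 + k - 1) mod k = i - 2"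
      proof -
        have "i - 1 + k - 1 = (i - 2) + k" using False by simp
        then show "(i - 1 + k - 1) mod k = i - 2" using less.prems p(2) by (simp only: mod_add_self2) simp
      qed (use less.prems p(2) False in simp)
      moreover have "p ! i \<noteq> p ! (i - 2)"
        using p(1) less.prems False by (simp add: nth_eq_iff_index_eq)
      ultimately show ?thesis using prev2 by auto
    qed
  qed
  then show ?thesis using xs(2) p(2) by (intro nth_equalityI) auto
qed

lemma cycle_reorient:
  assumes xs: "distinct xs" "length xs = k" and "2 \<le> k" and edge: "{x, y} \<in> cycle_edges k xs"
  obtains ys where "length ys = k" "distinct ys" "set ys = set xs"
    "cycle_edges k ys = cycle_edges k xs" "ys ! 0 = x" "ys ! 1 = y"
proof -
  obtain l where "l < k" "{x, y} = {xs ! l, xs ! ((l + 1) mod k)}"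
    using edge unfolding cycle_edges_def by auto
  moreover have "(l + 1) mod k < k" using \<open>l < k\<close> by simp
  ultimately have "x \<in> set xs" using xs(2) by (metis insert_iff nth_mem singletonD)
  then obtain j where j: "j < k" "xs ! j = x" using xs(2) by (auto simp: in_set_conv_nth)
  define zs where "zs = rotate j xs"
  have zs: "length zs = k" "distinct zs" "set zs = set xs" "cycle_edges k zs = cycle_edges k xs"
    using xs cycle_edges_rotate[OF xs(2)] by (auto simp: zs_def)
  have "zs ! 0 = x" using j xs(2) by (simp add: zs_def nth_rotate)
  then have "y = zs ! ((0 + 1) mod k) \<or> y = zs ! ((0 + k - 1) mod k)"
    using cycle_edge_neighbour[OF zs(2,1), of 0] edge zs(4) \<open>2 \<le> k\<close> by simp
  then consider "y = zs ! 1" | "y = zs ! (k - 1)" using \<open>2 \<le> k\<close> by auto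
  then show ?thesis
  proof cases
    case 1
    then show ?thesis using that zs \<open>zs ! 0 = x\<close> by blast
  next
    case 2
    define ys where "ys = rotate (k - 1) (rev zs)"
    have "length ys = k" "distinct ys" "set ys = set xs" "cycle_edges k ys = cycle_edges k xs"
      using zs cycle_edges_rotate[of "rev zs" k] cycle_edges_rev[of zs k] by (auto simp: ys_def)
    moreover have "ys ! 0 = x" "ys ! 1 = y"
      using zs(1) \<open>2 \<le> k\<close> \<open>zs ! 0 = x\<close> 2 by (simp_all add: ys_def nth_rotate rev_nth)
    ultimately show ?thesis using that by blast
  qed
qed

lemma finite_k_cycles: "finite V \<Longrightarrow> finite (k_cycles V E k)"
proof -
  assume "finite V"
  have "k_cycles V E k \<subseteq> cycle_edges k ` {xs. set xs \<subseteq> V \<and> length xs = k}"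
  proof
    fix C assume "C \<in> k_cycles V E k"
    then obtain xs where "length xs = k" "set xs \<subseteq> V" "C = cycle_edges k xs"
      unfolding mem_k_cycles_iff by blast
    then show "C \<in> cycle_edges k ` {xs. set xs \<subseteq> V \<and> length xs = k}" by blast
  qed
  moreover have "finite (cycle_edges k ` {xs. set xs \<subseteq> V \<and> length xs = k})"
    using finite_lists_length_eq[OF \<open>finite V\<close>] by (rule finite_imageI)
  ultimately show ?thesis by (rule finite_subset)
qed

lemma finite_simple_paths: "finite V \<Longrightarrow> finite (simple_paths V E m)"
proof -
  assume "finite V"
  have "simple_paths V E m \<subseteq> {xs. set xs \<subseteq> V \<and> length xs = m}"
    unfolding simple_paths_def by auto
  then show ?thesis using finite_lists_length_eq[OF \<open>finite V\<close>] by (rule finite_subset)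
qed

lemma simple_paths_Suc_subset:
  "simple_paths V E (Suc (Suc m))
     \<subseteq> (\<lambda>(q, v). q @ [v]) ` (SIGMA q:simple_paths V E (Suc m). {v \<in> V. E (last q) v})"
     (is "_ \<subseteq> _ ` ?T")
proof
  fix p assume p: "p \<in> simple_paths V E (Suc (Suc m))"
  then have "p \<noteq> []" unfolding simple_paths_def by auto
  then obtain q v where pqv: "p = q @ [v]" by (metis rev_exhaust)
  have lq: "length q = Suc m" using p pqv unfolding simple_paths_def by auto
  have edge: "E (p ! i) (p ! (i + 1))" if "i < Suc m" for i
    using p that unfolding simple_paths_def by auto
  have "E (q ! i) (q ! (i + 1))" if "i + 1 < Suc m" for i
    using edge[of i] that lq by (simp add: pqv nth_append)
  then have "q \<in> simple_paths V E (Suc m)"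
    using p pqv lq unfolding simple_paths_def by auto
  moreover have "v \<in> V" using p pqv unfolding simple_paths_def by auto
  moreover have "E (last q) v"
  proof -
    have "last q = q ! m" using lq by (metis diff_Suc_1 last_conv_nth list.size(3) nat.distinct(1))
    then show ?thesis using edge[of m] lq by (simp add: pqv nth_append)
  qed
  ultimately show "p \<in> (\<lambda>(q, v). q @ [v]) ` ?T"
    using pqv by (intro image_eqI[where x = "(q, v)"]) auto
qed

lemma card_simple_paths_le:
  assumes "finite V" and "0 \<le> D" and deg: "\<forall>u\<in>V. real (degree V E u) \<le> D"
  shows "real (card (simple_paths V E (Suc m))) \<le> real (card V) * D ^ m"
proof (induction m)
  case 0
  have "simple_paths V E (Suc 0) \<subseteq> (\<lambda>v. [v]) ` V"
    unfolding simple_paths_def by (auto simp: length_Suc_conv)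
  then have "card (simple_paths V E (Suc 0)) \<le> card ((\<lambda>v. [v]) ` V)"
    using \<open>finite V\<close> by (intro card_mono) auto
  also have "\<dots> \<le> card V" using \<open>finite V\<close> by (rule card_image_le)
  finally have "card (simple_paths V E (Suc 0)) \<le> card V" .
  then show ?case by simp
next
  case (Suc m)
  let ?S = "simple_paths V E (Suc m)"
  have fin: "finite ?S" using finite_simple_paths[OF \<open>finite V\<close>] .
  let ?T = "SIGMA q:?S. {v \<in> V. E (last q) v}"
  have "card (simple_paths V E (Suc (Suc m))) \<le> card ((\<lambda>(q, v). q @ [v]) ` ?T)"
    using simple_paths_Suc_subset[of V E m] fin \<open>finite V\<close> by (intro card_mono) auto
  also have "\<dots> \<le> card ?T" using fin \<open>finite V\<close> by (intro card_image_le) auto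
  also have "\<dots> = (\<Sum>q\<in>?S. degree V E (last q))"
    using fin \<open>finite V\<close> by (simp add: degree_def)
  finally have "real (card (simple_paths V E (Suc (Suc m)))) \<le> (\<Sum>q\<in>?S. real (degree V E (last q)))"
    by (simp flip: of_nat_sum)
  also have "\<dots> \<le> real (card ?S) * D"
  proof -
    have "last q \<in> V" if "q \<in> ?S" for q
    proof -
      have "q \<noteq> []" "set q \<subseteq> V" using that unfolding simple_paths_def by auto
      then show ?thesis using last_in_set by blast
    qed
    then show ?thesis using deg sum_bounded_above[of ?S "\<lambda>q. real (degree V E (last q))" D] by auto
  qed
  also have "\<dots> \<le> real (card V) * D ^ m * D"
    using Suc \<open>0 \<le> D\<close> by (rule mult_right_mono)
  finally show ?case by (simp add: algebra_simps)
qed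

lemma card_simple_paths_le_powr:
  assumes "finite V" and "3 \<le> k" and deg: "\<forall>u\<in>V. real (degree V E u) \<le> sqrt (real (card V))"
  shows "real (card (simple_paths V E (k - 2))) \<le> real (card V) powr ((real k - 1) / 2)"
proof -
  define n where "n = real (card V)"
  have "k - 2 = Suc (k - 3)" using \<open>3 \<le> k\<close> by simp
  then have "real (card (simple_paths V E (k - 2))) \<le> n * sqrt n ^ (k - 3)"
    using card_simple_paths_le[OF \<open>finite V\<close> _ deg, of "k - 3"] by (simp add: n_def)
  also have "\<dots> = n powr ((real k - 1) / 2)"
  proof (cases "n = 0")
    case False
    then have "0 < n" by (simp add: n_def)
    then have "sqrt n ^ (k - 3) = n powr (real (k - 3) / 2)"
      by (simp add: powr_half_sqrt[symmetric] powr_realpow[symmetric] powr_powr)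
    then have "n * sqrt n ^ (k - 3) = n powr (1 + real (k - 3) / 2)"
      using \<open>0 < n\<close> by (simp add: powr_add)
    also have "1 + real (k - 3) / 2 = (real k - 1) / 2" using \<open>3 \<le> k\<close> by (simp add: field_simps)
    finally show ?thesis .
  qed simp
  finally show ?thesis by (simp add: n_def)
qed

lemma k_cycle_contains_simple_path:
  assumes "C \<in> k_cycles V E k"
  shows "\<exists>p\<in>simple_paths V E (k - 2). path_edges p \<subseteq> C"
proof -
  obtain xs where xs: "length xs = k" "distinct xs" "set xs \<subseteq> V"
      "\<forall>i<k. E (xs ! i) (xs ! ((i + 1) mod k))" "C = cycle_edges k xs"
    using assms unfolding mem_k_cycles_iff by blast
  let ?p = "take (k - 2) xs"
  have "E (?p ! i) (?p ! (i + 1))" if "i + 1 < k - 2" for i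
    using xs(4) that by (metis add_lessD1 less_diff_conv mod_less nth_take)
  then have "?p \<in> simple_paths V E (k - 2)"
    using xs(1-3) set_take_subset[of "k - 2" xs] unfolding simple_paths_def by auto
  moreover have "path_edges ?p \<subseteq> C"
  proof
    fix e assume "e \<in> path_edges ?p"
    then obtain i where i: "i + 1 < k - 2" "e = {?p ! i, ?p ! (i + 1)}"
      unfolding path_edges_def using xs(1) by auto
    then have "e = {xs ! i, xs ! ((i + 1) mod k)}" by simp
    then show "e \<in> C" using xs(5) cycle_edgesI[of i k xs] i(1) by simp
  qed
  ultimately show ?thesis by blast
qed

lemma card_k_cycles_le_sum_cycles_through:
  assumes "finite V"
  shows "card (k_cycles V E k) \<le> (\<Sum>p\<in>simple_paths V E (k - 2). cycles_through V E k p)"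
proof -
  let ?P = "simple_paths V E (k - 2)" and ?K = "k_cycles V E k"
  have "?K \<subseteq> (\<Union>p\<in>?P. {C \<in> ?K. path_edges p \<subseteq> C})"
  proof
    fix C assume "C \<in> ?K"
    then show "C \<in> (\<Union>p\<in>?P. {C \<in> ?K. path_edges p \<subseteq> C})"
      using k_cycle_contains_simple_path[of C V E k] by blast
  qed
  moreover have "finite (\<Union>p\<in>?P. {C \<in> ?K. path_edges p \<subseteq> C})"
    using finite_k_cycles[OF assms] by (rule finite_subset[rotated]) blast
  ultimately have "card ?K \<le> card (\<Union>p\<in>?P. {C \<in> ?K. path_edges p \<subseteq> C})"
    by (rule card_mono[rotated])
  also have "\<dots> \<le> (\<Sum>p\<in>?P. card {C \<in> ?K. path_edges p \<subseteq> C})"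
    using finite_simple_paths[OF assms] by (rule card_UN_le)
  finally show ?thesis unfolding cycles_through_def .
qed

lemma k_cycle_through_path_closes:
  assumes sg: "simple_graph V E" and "4 \<le> k" and C: "C \<in> k_cycles V E k"
    and p: "p \<in> simple_paths V E (k - 2)" and sub: "path_edges p \<subseteq> C"
  obtains a b where "a \<in> V" "b \<in> V" "E (last p) a" "E (hd p) b" "C = cycle_edges k (p @ [a, b])"
proof -
  have sym: "\<forall>u v. E u v \<longrightarrow> E v u" using sg unfolding simple_graph_def by blast
  obtain xs where xs: "length xs = k" "distinct xs" "set xs \<subseteq> V"
      "\<forall>i<k. E (xs ! i) (xs ! ((i + 1) mod k))" "C = cycle_edges k xs"
    using C unfolding mem_k_cycles_iff by blast
  have lp: "length p = k - 2" and dp: "distinct p" using p unfolding simple_paths_def by auto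
  have "{p ! 0, p ! (0 + 1)} \<in> path_edges p"
    using lp \<open>4 \<le> k\<close> unfolding path_edges_def by (intro CollectI exI[of _ 0]) simp
  then have "{p ! 0, p ! 1} \<in> cycle_edges k xs" using sub xs(5) by auto
  then obtain ys where ys: "length ys = k" "distinct ys" "set ys = set xs"
      "cycle_edges k ys = C" "ys ! 0 = p ! 0" "ys ! 1 = p ! 1"
    using cycle_reorient[OF xs(2,1)] \<open>4 \<le> k\<close> xs(5) by auto
  have "take (k - 2) ys = p"
    using cycle_prefix_eq_path[OF ys(2,1) dp] lp sub ys(4-6) by simp
  define a b where "a = ys ! (k - 2)" and "b = ys ! (k - 1)"
  have "drop (k - 2) ys = [a, b]"
    using ys(1) \<open>4 \<le> k\<close> Cons_nth_drop_Suc[of "k - 2" ys] Cons_nth_drop_Suc[of "k - 1" ys]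
    by (simp add: a_def b_def Suc_diff_Suc numeral_2_eq_2)
  with \<open>take (k - 2) ys = p\<close> have C_eq: "C = cycle_edges k (p @ [a, b])"
    using ys(4) by (metis append_take_drop_id)
  have "a \<in> set ys" "b \<in> set ys" using ys(1) \<open>4 \<le> k\<close> by (auto simp: a_def b_def)
  then have "a \<in> V" "b \<in> V" using ys(3) xs(3) by auto
  have adj: "E u v" if "{u, v} \<in> C" for u v
    using cycle_edges_adjacent[OF xs(4) sym] that xs(5) by simp
  have "p \<noteq> []" using lp \<open>4 \<le> k\<close> by auto
  then have q: "(p @ [a, b]) ! (k - 3) = last p" "(p @ [a, b]) ! (k - 2) = a"
      "(p @ [a, b]) ! (k - 1) = b" "(p @ [a, b]) ! 0 = hd p"
    using lp \<open>4 \<le> k\<close> by (auto simp: nth_append last_conv_nth hd_conv_nth)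
  have "(k - 3 + 1) mod k = k - 2" "(k - 1 + 1) mod k = 0" using \<open>4 \<le> k\<close> by auto
  then have "{last p, a} \<in> C" "{b, hd p} \<in> C"
    using cycle_edgesI[of "k - 3" k "p @ [a, b]"] cycle_edgesI[of "k - 1" k "p @ [a, b]"]
      C_eq q \<open>4 \<le> k\<close> by auto
  then have "E (last p) a" "E (hd p) b" using adj by (auto simp: insert_commute)
  then show ?thesis using that \<open>a \<in> V\<close> \<open>b \<in> V\<close> C_eq by blast
qed

lemma cycles_through_le_degree:
  assumes sg: "simple_graph V E" and "4 \<le> k" and p: "p \<in> simple_paths V E (k - 2)"
  shows "cycles_through V E k p \<le> degree V E (last p) * degree V E (hd p)"
proof -
  have "finite V" using sg unfolding simple_graph_def by blast
  let ?A = "{a \<in> V. E (last p) a}" and ?B = "{b \<in> V. E (hd p) b}"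
  have "{C \<in> k_cycles V E k. path_edges p \<subseteq> C}
      \<subseteq> (\<lambda>(a, b). cycle_edges k (p @ [a, b])) ` (?A \<times> ?B)"
  proof
    fix C assume "C \<in> {C \<in> k_cycles V E k. path_edges p \<subseteq> C}"
    then obtain a b where "a \<in> ?A" "b \<in> ?B" "C = cycle_edges k (p @ [a, b])"
      using k_cycle_through_path_closes[OF sg \<open>4 \<le> k\<close> _ p] by blast
    then show "C \<in> (\<lambda>(a, b). cycle_edges k (p @ [a, b])) ` (?A \<times> ?B)"
      by (intro image_eqI[where x = "(a, b)"]) auto
  qed
  then have "cycles_through V E k p \<le> card ((\<lambda>(a, b). cycle_edges k (p @ [a, b])) ` (?A \<times> ?B))"
    unfolding cycles_through_def using \<open>finite V\<close> by (intro card_mono) auto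
  also have "\<dots> \<le> card (?A \<times> ?B)" using \<open>finite V\<close> by (intro card_image_le) auto
  finally show ?thesis by (simp add: card_cartesian_product degree_def)
qed

lemma cycles_through_le_card:
  assumes sg: "simple_graph V E" and "4 \<le> k"
    and deg: "\<forall>u\<in>V. real (degree V E u) \<le> sqrt (real (card V))"
    and p: "p \<in> simple_paths V E (k - 2)"
  shows "real (cycles_through V E k p) \<le> real (card V)"
proof -
  have "p \<noteq> []" "set p \<subseteq> V" using p \<open>4 \<le> k\<close> unfolding simple_paths_def by auto
  then have "hd p \<in> V" "last p \<in> V" by auto
  have "real (cycles_through V E k p) \<le> real (degree V E (last p)) * real (degree V E (hd p))"
    using cycles_through_le_degree[OF sg \<open>4 \<le> k\<close> p] by (simp flip: of_nat_mult)
  also have "\<dots> \<le> sqrt (real (card V)) * sqrt (real (card V))"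
    using deg \<open>hd p \<in> V\<close> \<open>last p \<in> V\<close> by (intro mult_mono) auto
  finally show ?thesis by simp
qed

theorem lemma5p3:
  fixes V :: "'a set" and E :: "'a \<Rightarrow> 'a \<Rightarrow> bool" and k :: nat and \<gamma> :: real
  assumes "k \<ge> 4"
    and "0 \<le> \<gamma>" and "\<gamma> < 1/2"
    and "simple_graph V E"
    and "\<forall>u\<in>V. real (degree V E u) \<le> sqrt (real (card V))"
    and "real (card (k_cycles V E k)) \<ge> real (card V) powr (real k / 2 + \<gamma>)"
  shows "real (card {p. dense_path V E k \<gamma> p}) \<ge> (1/2) * real (card V) powr (real k / 2 - 1 + \<gamma>)"
proof (cases "card V = 0")
  case False
  have "finite V" using assms(4) unfolding simple_graph_def by blast
  define n where "n = real (card V)"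
  define P where "P = simple_paths V E (k - 2)"
  define ct where "ct = (\<lambda>p. real (cycles_through V E k p))"
  define thr where "thr = n powr (1/2 + \<gamma>) / 2"
  have "0 < n" using False by (simp add: n_def)
  have "n powr (real k / 2 + \<gamma>) / (2 * n) \<le> card {p \<in> P. thr \<le> ct p}"
  proof (rule card_ge_threshold_lower_bound)
    show "finite P" unfolding P_def using \<open>finite V\<close> by (rule finite_simple_paths)
    show "ct p \<le> n" if "p \<in> P" for p
      using cycles_through_le_card[OF assms(4,1,5)] that unfolding ct_def n_def P_def by blast
    show "n powr (real k / 2 + \<gamma>) \<le> sum ct P"
      using assms(6) card_k_cycles_le_sum_cycles_through[OF \<open>finite V\<close>, of E k]
      unfolding n_def ct_def P_def by (simp flip: of_nat_sum)
    have "card P * thr \<le> n powr ((real k - 1) / 2) * (n powr (1/2 + \<gamma>) / 2)"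
      using card_simple_paths_le_powr[OF \<open>finite V\<close> _ assms(5)] assms(1)
      unfolding P_def n_def thr_def by (intro mult_right_mono) auto
    also have "\<dots> = n powr ((real k - 1) / 2 + (1/2 + \<gamma>)) / 2"
      by (simp add: powr_add)
    also have "(real k - 1) / 2 + (1/2 + \<gamma>) = real k / 2 + \<gamma>"
      by (simp add: field_simps)
    finally show "card P * thr \<le> n powr (real k / 2 + \<gamma>) / 2" .
  qed (use \<open>0 < n\<close> in \<open>simp_all add: thr_def\<close>)
  moreover have "n powr (real k / 2 + \<gamma>) / (2 * n) = (1/2) * n powr (real k / 2 - 1 + \<gamma>)"
    using powr_diff[of n "real k / 2 + \<gamma>" 1] \<open>0 < n\<close> by (simp add: algebra_simps)
  moreover have "{p. dense_path V E k \<gamma> p} = {p \<in> P. thr \<le> ct p}"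
    unfolding dense_path_def P_def thr_def ct_def n_def by auto
  ultimately show ?thesis by (simp add: n_def)
qed simp

end
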